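(* Let $(H,+,\circ)$ be a commutative multiplicative hyperring with identity and let $P$ be a strong $\mathcal{C}$-hyperideal of $H$. Then: (i) if $K\subseteq H$ is a multiplicative hyperring (under the restricted operations) and $P$ is an sdf-absorbing hyperideal of $H$, then $P\cap K$ is an sdf-absorbing hyperideal of $K$; (ii) if $Q$ is a hyperideal of $H$ with $Q\subseteq P$ and $P$ is an sdf-absorbing hyperideal of $H$, then $P/Q$ is an sdf-absorbing hyperideal of $H/Q$; (iii) if $Q$ is a hyperideal of $H$ with $Q\subsetneq P$, then $P$ is an sdf-absorbing hyperideal of $H$ if and only if $P/Q$ is an sdf-absorbing hyperideal of $H/Q$.
   Context: A commutative multiplicative hyperring $(H,+,\circ)$ consists of an abelian group $(H,+)$ and an associative, commutative hyperoperation $\circ: H\times H\to P^*(H)$ with $x\circ(y+z)\subseteq x\circ y+x\circ z$ and $x\circ(-y)=-(x\circ y)=(-x)\circ y$. For subsets $A,B$, $A\circ B=\bigcup_{a\in A,b\in B}a\circ b$, $A\pm B=\{a\pm b\}$; $x^2=x\circ x$. Identity: $x\in x\circ 1$ for all $x$. A hyperideal is a nonempty $P$ with $x-y\in P$ and $r\circ x\subseteq P$ for $x,y\in P$, $r\in H$. For a hyperideal $Q$, $H/Q=\{x+Q\}$ with coset addition and $(x+Q)*(y+Q)=\{z+Q: z\in x\circ y\}$, and $P/Q=\{x+Q: x\in P\}$. Let $\mathcal{C}=\{c_1\circ\cdots\circ c_n: c_i\in H\}$ and $\mathfrak{C}=\{\sum_{i=1}^m C_i: C_i\in\mathcal{C}\}$;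 $P$ is a strong $\mathcal{C}$-hyperideal if for every $D\in\mathfrak{C}$, $D\cap P\neq\varnothing$ implies $D\subseteq P$. A proper hyperideal $P$ is sdf-absorbing if whenever $0\neq x,y$ and $x^2-y^2\subseteq P$, then $x-y\in P$ or $x+y\in P$. *)

theory Defs
  imports Main
begin

record 'a mhr =
  carrier :: "'a set"
  add :: "'a \<Rightarrow> 'a \<Rightarrow> 'a"
  zero :: 'a
  neg :: "'a \<Rightarrow> 'a"
  hmul :: "'a \<Rightarrow> 'a \<Rightarrow> 'a set"

definition sub :: "('a, 'b) mhr_scheme \<Rightarrow> 'a \<Rightarrow> 'a \<Rightarrow> 'a" where
  "sub R x y = add R x (neg R y)"

definition set_add :: "('a, 'b) mhr_scheme \<Rightarrow> 'a set \<Rightarrow> 'a set \<Rightarrow> 'a set" where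
  "set_add R A B = {add R a b | a b. a \<in> A \<and> b \<in> B}"

definition set_sub :: "('a, 'b) mhr_scheme \<Rightarrow> 'a set \<Rightarrow> 'a set \<Rightarrow> 'a set" where
  "set_sub R A B = {sub R a b | a b. a \<in> A \<and> b \<in> B}"

definition set_mul :: "('a, 'b) mhr_scheme \<Rightarrow> 'a set \<Rightarrow> 'a set \<Rightarrow> 'a set" where
  "set_mul R A B = (\<Union>a\<in>A. \<Union>b\<in>B. hmul R a b)"

definition comm_mult_hyperring :: "('a, 'b) mhr_scheme \<Rightarrow> bool" where
  "comm_mult_hyperring R \<longleftrightarrow>
     \<comment> \<open>(carrier, add) is an abelian group\<close>
     (\<forall>x\<in>carrier R. \<forall>y\<in>carrier R. add R x y \<in> carrier R) \<and>
     (\<forall>x\<in>carrier R. \<forall>y\<in>carrier R. \<forall>z\<in>carrier R. add R (add R x y) z = add R x (add R y z)) \<and>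
     (\<forall>x\<in>carrier R. \<forall>y\<in>carrier R. add R x y = add R y x) \<and>
     zero R \<in> carrier R \<and>
     (\<forall>x\<in>carrier R. add R x (zero R) = x) \<and>
     (\<forall>x\<in>carrier R. neg R x \<in> carrier R \<and> add R x (neg R x) = zero R) \<and>
     \<comment> \<open>hyperoperation into nonempty subsets of the carrier\<close>
     (\<forall>x\<in>carrier R. \<forall>y\<in>carrier R. hmul R x y \<subseteq> carrier R \<and> hmul R x y \<noteq> {}) \<and>
     \<comment> \<open>associativity and commutativity\<close>
     (\<forall>x\<in>carrier R. \<forall>y\<in>carrier R. \<forall>z\<in>carrier R.
        set_mul R (hmul R x y) {z} = set_mul R {x} (hmul R y z)) \<and>
     (\<forall>x\<in>carrier R. \<forall>y\<in>carrier R. hmul R x y = hmul R y x) \<and>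
     \<comment> \<open>distributivity (inclusion)\<close>
     (\<forall>x\<in>carrier R. \<forall>y\<in>carrier R. \<forall>z\<in>carrier R.
        hmul R x (add R y z) \<subseteq> set_add R (hmul R x y) (hmul R x z)) \<and>
     \<comment> \<open>sign rules\<close>
     (\<forall>x\<in>carrier R. \<forall>y\<in>carrier R.
        hmul R x (neg R y) = neg R ` (hmul R x y) \<and> hmul R (neg R x) y = neg R ` (hmul R x y))"

definition has_identity :: "('a, 'b) mhr_scheme \<Rightarrow> bool" where
  "has_identity R \<longleftrightarrow> (\<exists>e\<in>carrier R. \<forall>x\<in>carrier R. x \<in> hmul R x e)"

definition hyperideal :: "('a, 'b) mhr_scheme \<Rightarrow> 'a set \<Rightarrow> bool" where
  "hyperideal R P \<longleftrightarrow> P \<subseteq> carrier R \<and> P \<noteq> {} \<and>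
     (\<forall>x\<in>P. \<forall>y\<in>P. sub R x y \<in> P) \<and>
     (\<forall>r\<in>carrier R. \<forall>x\<in>P. hmul R r x \<subseteq> P)"

text \<open>Iterated hyperproducts c1 o ... o cn (n >= 1) and finite sums of such sets.\<close>

fun set_prod_list :: "('a, 'b) mhr_scheme \<Rightarrow> 'a set \<Rightarrow> 'a list \<Rightarrow> 'a set" where
  "set_prod_list R A [] = A"
| "set_prod_list R A (d # ds) = set_prod_list R (set_mul R A {d}) ds"

fun set_sum_list :: "('a, 'b) mhr_scheme \<Rightarrow> 'a set \<Rightarrow> 'a set list \<Rightarrow> 'a set" where
  "set_sum_list R A [] = A"
| "set_sum_list R A (B # Bs) = set_sum_list R (set_add R A B) Bs"

definition prod_sets :: "('a, 'b) mhr_scheme \<Rightarrow> 'a set set" where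
  "prod_sets R = {set_prod_list R {c} cs | c cs. c \<in> carrier R \<and> set cs \<subseteq> carrier R}"

definition sum_prod_sets :: "('a, 'b) mhr_scheme \<Rightarrow> 'a set set" where
  "sum_prod_sets R = {set_sum_list R C Cs | C Cs. C \<in> prod_sets R \<and> set Cs \<subseteq> prod_sets R}"

definition strong_C_hyperideal :: "('a, 'b) mhr_scheme \<Rightarrow> 'a set \<Rightarrow> bool" where
  "strong_C_hyperideal R P \<longleftrightarrow> hyperideal R P \<and>
     (\<forall>D\<in>sum_prod_sets R. D \<inter> P \<noteq> {} \<longrightarrow> D \<subseteq> P)"

definition sdf_absorbing :: "('a, 'b) mhr_scheme \<Rightarrow> 'a set \<Rightarrow> bool" where
  "sdf_absorbing R P \<longleftrightarrow> hyperideal R P \<and> P \<noteq> carrier R \<and>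
     (\<forall>x\<in>carrier R. \<forall>y\<in>carrier R. x \<noteq> zero R \<longrightarrow> y \<noteq> zero R \<longrightarrow>
        set_sub R (hmul R x x) (hmul R y y) \<subseteq> P \<longrightarrow>
        sub R x y \<in> P \<or> add R x y \<in> P)"

definition coset :: "('a, 'b) mhr_scheme \<Rightarrow> 'a set \<Rightarrow> 'a \<Rightarrow> 'a set" where
  "coset R Q x = {add R x q | q. q \<in> Q}"

definition quot_set :: "('a, 'b) mhr_scheme \<Rightarrow> 'a set \<Rightarrow> 'a set \<Rightarrow> 'a set set" where
  "quot_set R Q P = coset R Q ` P"

text \<open>(x+Q) * (y+Q) = {z + Q | z in x o y}; taken over all representatives, which
  gives the same set for a hyperideal Q.\<close>

definition quot :: "('a, 'b) mhr_scheme \<Rightarrow> 'a set \<Rightarrow> 'a set mhr" where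
  "quot R Q = \<lparr> carrier = quot_set R Q (carrier R),
               add = (\<lambda>A B. set_add R A B),
               zero = Q,
               neg = (\<lambda>A. neg R ` A),
               hmul = (\<lambda>A B. coset R Q ` (\<Union>a\<in>A. \<Union>b\<in>B. hmul R a b)) \<rparr>"

end

theory Submission
  imports Defs
begin

text \<open>Everything rests on the product of cosets: (x + Q) \<circ> (y + Q) = {u + Q | u \<in> x \<circ> y},
  because (x + q) \<circ> (y + q') \<subseteq> x \<circ> y + Q by distributivity. Hence the sdf condition for
  x + Q, y + Q in H/Q is literally the one for x, y in H, and x + Q is zero exactly when x \<in> Q;
  this gives (ii) and the case x, y \<notin> Q of (iii). If instead x \<in> Q \<subseteq> P, then x \<circ> x \<subseteq> P and
  the hypothesis forces y \<circ> y \<subseteq> P. Here strictness of Q \<subset> P enters: for p \<in> P - Q and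
  z \<circ> z \<subseteq> P, applying the sdf property of P/Q to z + p and p yields z \<in> P. Part (i) is a
  restriction of the definition.\<close>

lemma sdf_absorbingD:
  "sdf_absorbing R P \<Longrightarrow> x \<in> carrier R \<Longrightarrow> y \<in> carrier R \<Longrightarrow> x \<noteq> zero R \<Longrightarrow> y \<noteq> zero R \<Longrightarrow>
    set_sub R (hmul R x x) (hmul R y y) \<subseteq> P \<Longrightarrow> sub R x y \<in> P \<or> add R x y \<in> P"
  unfolding sdf_absorbing_def by blast

locale mult_hyperring =
  fixes R :: "('a, 'b) mhr_scheme"
  assumes comm_mult_hyperring: "comm_mult_hyperring R"
begin

lemma add_closed [simp]: "x \<in> carrier R \<Longrightarrow> y \<in> carrier R \<Longrightarrow> add R x y \<in> carrier R"
  using comm_mult_hyperring unfolding comm_mult_hyperring_def by meson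

lemma add_assoc:
  "x \<in> carrier R \<Longrightarrow> y \<in> carrier R \<Longrightarrow> z \<in> carrier R \<Longrightarrow>
    add R (add R x y) z = add R x (add R y z)"
  using comm_mult_hyperring unfolding comm_mult_hyperring_def by meson

lemma add_comm: "x \<in> carrier R \<Longrightarrow> y \<in> carrier R \<Longrightarrow> add R x y = add R y x"
  using comm_mult_hyperring unfolding comm_mult_hyperring_def by meson

lemma zero_closed [simp]: "zero R \<in> carrier R"
  using comm_mult_hyperring unfolding comm_mult_hyperring_def by meson

lemma add_zero_right [simp]: "x \<in> carrier R \<Longrightarrow> add R x (zero R) = x"
  using comm_mult_hyperring unfolding comm_mult_hyperring_def by meson

lemma neg_closed [simp]: "x \<in> carrier R \<Longrightarrow> neg R x \<in> carrier R"
  using comm_mult_hyperring unfolding comm_mult_hyperring_def by meson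

lemma add_neg_right [simp]: "x \<in> carrier R \<Longrightarrow> add R x (neg R x) = zero R"
  using comm_mult_hyperring unfolding comm_mult_hyperring_def by meson

lemma hmul_closed: "x \<in> carrier R \<Longrightarrow> y \<in> carrier R \<Longrightarrow> hmul R x y \<subseteq> carrier R"
  using comm_mult_hyperring unfolding comm_mult_hyperring_def by meson

lemma hmul_nonempty: "x \<in> carrier R \<Longrightarrow> y \<in> carrier R \<Longrightarrow> hmul R x y \<noteq> {}"
  using comm_mult_hyperring unfolding comm_mult_hyperring_def by meson

lemma hmul_comm: "x \<in> carrier R \<Longrightarrow> y \<in> carrier R \<Longrightarrow> hmul R x y = hmul R y x"
  using comm_mult_hyperring unfolding comm_mult_hyperring_def by meson

lemma hmul_add_subset:
  "x \<in> carrier R \<Longrightarrow> y \<in> carrier R \<Longrightarrow> z \<in> carrier R \<Longrightarrow>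
    hmul R x (add R y z) \<subseteq> set_add R (hmul R x y) (hmul R x z)"
  using comm_mult_hyperring unfolding comm_mult_hyperring_def by meson

lemma add_zero_left [simp]: "x \<in> carrier R \<Longrightarrow> add R (zero R) x = x"
  by (simp add: add_comm)

lemma add_neg_left [simp]: "x \<in> carrier R \<Longrightarrow> add R (neg R x) x = zero R"
  by (simp add: add_comm)

lemma add_left_commute:
  "x \<in> carrier R \<Longrightarrow> y \<in> carrier R \<Longrightarrow> z \<in> carrier R \<Longrightarrow>
    add R x (add R y z) = add R y (add R x z)"
  by (metis add_assoc add_comm)

lemma neg_add_cancel_left [simp]:
  "x \<in> carrier R \<Longrightarrow> y \<in> carrier R \<Longrightarrow> add R (neg R x) (add R x y) = y"
  by (simp flip: add_assoc)

lemma add_left_cancel: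
  "a \<in> carrier R \<Longrightarrow> x \<in> carrier R \<Longrightarrow> y \<in> carrier R \<Longrightarrow> add R a x = add R a y \<longleftrightarrow> x = y"
  by (metis neg_add_cancel_left)

lemma neg_neg [simp]: "x \<in> carrier R \<Longrightarrow> neg R (neg R x) = x"
  by (metis add_left_cancel add_neg_left add_neg_right neg_closed)

lemma neg_add: "x \<in> carrier R \<Longrightarrow> y \<in> carrier R \<Longrightarrow>
    neg R (add R x y) = add R (neg R x) (neg R y)"
proof -
  assume x: "x \<in> carrier R" and y: "y \<in> carrier R"
  have "add R (add R x y) (add R (neg R x) (neg R y)) = zero R"
    using x y by (simp add: add_assoc add_left_commute[of y])
  then show ?thesis
    using x y add_left_cancel[of "add R x y" "neg R (add R x y)" "add R (neg R x) (neg R y)"]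
    by simp
qed

lemma neg_zero [simp]: "neg R (zero R) = zero R"
proof -
  have "neg R (zero R) = add R (zero R) (neg R (zero R))"
    by (simp only: add_zero_left neg_closed zero_closed)
  also have "\<dots> = zero R" by (rule add_neg_right[OF zero_closed])
  finally show ?thesis .
qed

lemma sub_closed [simp]: "x \<in> carrier R \<Longrightarrow> y \<in> carrier R \<Longrightarrow> sub R x y \<in> carrier R"
  by (simp add: sub_def)

lemma sub_add_cancel [simp]: "x \<in> carrier R \<Longrightarrow> y \<in> carrier R \<Longrightarrow> add R (sub R x y) y = x"
  by (simp add: sub_def add_assoc)

lemma add_sub_cancel [simp]: "x \<in> carrier R \<Longrightarrow> y \<in> carrier R \<Longrightarrow> sub R (add R x y) y = x"
  by (simp add: sub_def add_assoc)

lemma neg_sub: "x \<in> carrier R \<Longrightarrow> y \<in> carrier R \<Longrightarrow> neg R (sub R x y) = sub R y x"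
  by (simp add: sub_def neg_add add_comm)

lemma hyperideal_carrier: "hyperideal R I \<Longrightarrow> x \<in> I \<Longrightarrow> x \<in> carrier R"
  unfolding hyperideal_def by blast

lemma hyperideal_sub_closed: "hyperideal R I \<Longrightarrow> x \<in> I \<Longrightarrow> y \<in> I \<Longrightarrow> sub R x y \<in> I"
  unfolding hyperideal_def by blast

lemma hyperideal_hmul_closed:
  "hyperideal R I \<Longrightarrow> r \<in> carrier R \<Longrightarrow> x \<in> I \<Longrightarrow> hmul R r x \<subseteq> I"
  unfolding hyperideal_def by blast

lemma hyperideal_zero: assumes I: "hyperideal R I" shows "zero R \<in> I"
proof -
  obtain x where x: "x \<in> I" using I unfolding hyperideal_def by blast
  show ?thesis
    using hyperideal_sub_closed[OF I x x] by (simp add: sub_def hyperideal_carrier[OF I x])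
qed

lemma hyperideal_neg: assumes I: "hyperideal R I" and x: "x \<in> I" shows "neg R x \<in> I"
  using hyperideal_sub_closed[OF I hyperideal_zero[OF I] x]
  by (simp add: sub_def hyperideal_carrier[OF I x])

lemma hyperideal_add:
  assumes I: "hyperideal R I" and x: "x \<in> I" and y: "y \<in> I" shows "add R x y \<in> I"
  using hyperideal_sub_closed[OF I x hyperideal_neg[OF I y]]
  by (simp add: sub_def hyperideal_carrier[OF I y])

lemma hyperideal_add_mem_iff:
  "hyperideal R I \<Longrightarrow> x \<in> I \<Longrightarrow> y \<in> carrier R \<Longrightarrow> add R y x \<in> I \<longleftrightarrow> y \<in> I"
  by (metis add_sub_cancel hyperideal_add hyperideal_carrier hyperideal_sub_closed)

lemma hyperideal_sub_mem_iff:
  "hyperideal R I \<Longrightarrow> x \<in> I \<Longrightarrow> y \<in> carrier R \<Longrightarrow> sub R y x \<in> I \<longleftrightarrow> y \<in> I"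
  by (metis sub_add_cancel hyperideal_add hyperideal_carrier hyperideal_sub_closed)

lemma hmul_add_hyperideal_subset:
  assumes I: "hyperideal R I" and x: "x \<in> carrier R" and y: "y \<in> carrier R"
    and q: "q \<in> I" and q': "q' \<in> I"
  shows "hmul R (add R x q) (add R y q') \<subseteq> set_add R (hmul R x y) I"
proof
  have qc: "q \<in> carrier R" "q' \<in> carrier R" using I q q' by (auto simp: hyperideal_carrier)
  fix z assume "z \<in> hmul R (add R x q) (add R y q')"
  then obtain z1 z2 where z1: "z1 \<in> hmul R y (add R x q)" and z2: "z2 \<in> hmul R (add R x q) q'"
    and z: "z = add R z1 z2"
    using hmul_add_subset[of "add R x q" y q'] hmul_comm[of y] x y qc by (auto simp: set_add_def)
  obtain u r where u: "u \<in> hmul R x y" and r: "r \<in> hmul R y q" and z1_eq: "z1 = add R u r"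
    using z1 hmul_add_subset[of y x q] hmul_comm[of y x] x y qc by (auto simp: set_add_def)
  have "r \<in> I" "z2 \<in> I"
    using r z2 hyperideal_hmul_closed[OF I] x y q q' qc add_closed[OF x, of q] by blast+
  moreover have "z = add R u (add R r z2)"
    using z z1_eq u hmul_closed[OF x y] \<open>r \<in> I\<close> \<open>z2 \<in> I\<close> I
    by (auto simp: add_assoc hyperideal_carrier)
  ultimately show "z \<in> set_add R (hmul R x y) I"
    unfolding set_add_def using u hyperideal_add[OF I] by blast
qed

lemma hyperideal_set_sub_subset_iff:
  assumes I: "hyperideal R I" and A: "A \<subseteq> carrier R" "A \<noteq> {}" and B: "B \<subseteq> carrier R" "B \<noteq> {}"
    and AB: "set_sub R A B \<subseteq> I"
  shows "A \<subseteq> I \<longleftrightarrow> B \<subseteq> I"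
proof
  assume "A \<subseteq> I"
  obtain a where a: "a \<in> A" using A by blast
  show "B \<subseteq> I"
  proof
    fix b assume b: "b \<in> B"
    have "sub R a b \<in> I" using AB a b by (auto simp: set_sub_def)
    then have "sub R b a \<in> I" using hyperideal_neg[OF I] neg_sub a b A B by (metis subsetD)
    then show "b \<in> I" using hyperideal_sub_mem_iff[OF I] \<open>A \<subseteq> I\<close> a b B by blast
  qed
next
  assume "B \<subseteq> I"
  obtain b where b: "b \<in> B" using B by blast
  show "A \<subseteq> I"
  proof
    fix a assume a: "a \<in> A"
    have "sub R a b \<in> I" using AB a b by (auto simp: set_sub_def)
    then show "a \<in> I" using hyperideal_sub_mem_iff[OF I] \<open>B \<subseteq> I\<close> a b A by blast
  qed
qed

end

locale quotient_hyperring = mult_hyperring +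
  fixes Q :: "'a set"
  assumes hyperideal: "hyperideal R Q"
begin

lemma coset_iff: "z \<in> coset R Q x \<longleftrightarrow> (\<exists>q\<in>Q. z = add R x q)"
  by (auto simp: coset_def)

lemma coset_self: "x \<in> carrier R \<Longrightarrow> x \<in> coset R Q x"
  using hyperideal_zero[OF hyperideal] by (force simp: coset_iff)

lemma coset_add_right: assumes x: "x \<in> carrier R" and r: "r \<in> Q"
  shows "coset R Q (add R x r) = coset R Q x"
proof -
  have absorb: "coset R Q (add R y s) \<subseteq> coset R Q y" if "y \<in> carrier R" "s \<in> Q" for y s
    using that hyperideal_add[OF hyperideal] hyperideal_carrier[OF hyperideal]
    by (fastforce simp: coset_iff add_assoc)
  have rc: "r \<in> carrier R" using r hyperideal_carrier[OF hyperideal] by blast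
  have "coset R Q x = coset R Q (add R (add R x r) (neg R r))"
    using x rc by (simp add: add_assoc)
  also have "\<dots> \<subseteq> coset R Q (add R x r)"
    using absorb x rc r hyperideal_neg[OF hyperideal] by simp
  finally show ?thesis using absorb x r by blast
qed

lemma coset_eq_iff: assumes x: "x \<in> carrier R" and y: "y \<in> carrier R"
  shows "coset R Q x = coset R Q y \<longleftrightarrow> sub R x y \<in> Q"
proof
  assume "coset R Q x = coset R Q y"
  then obtain q where "q \<in> Q" "x = add R y q" using coset_self[OF x] by (auto simp: coset_iff)
  then show "sub R x y \<in> Q" using x y hyperideal_carrier[OF hyperideal] by (simp add: add_comm)
next
  assume "sub R x y \<in> Q"
  then have "coset R Q (add R y (sub R x y)) = coset R Q y" by (rule coset_add_right[OF y])
  then show "coset R Q x = coset R Q y" using x y by (metis add_comm sub_add_cancel sub_closed)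
qed

lemma coset_zero: "coset R Q (zero R) = Q"
proof -
  have "add R (zero R) q = q" if "q \<in> Q" for q
    using that hyperideal_carrier[OF hyperideal] by simp
  then show ?thesis by (auto simp: coset_iff)
qed

lemma coset_eq_hyperideal_iff: "x \<in> carrier R \<Longrightarrow> coset R Q x = Q \<longleftrightarrow> x \<in> Q"
  using coset_eq_iff[of x "zero R"] by (simp add: coset_zero sub_def)

lemma set_add_coset: assumes x: "x \<in> carrier R" and y: "y \<in> carrier R"
  shows "set_add R (coset R Q x) (coset R Q y) = coset R Q (add R x y)"
proof (intro equalityI subsetI)
  fix z assume "z \<in> set_add R (coset R Q x) (coset R Q y)"
  then obtain q q' where q: "q \<in> Q" "q' \<in> Q" and z: "z = add R (add R x q) (add R y q')"
    by (auto simp: set_add_def coset_iff)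
  have "z = add R (add R x y) (add R q q')"
    using z x y q hyperideal_carrier[OF hyperideal] by (simp add: add_assoc add_left_commute[of q])
  then show "z \<in> coset R Q (add R x y)"
    using q hyperideal_add[OF hyperideal] by (auto simp: coset_iff)
next
  fix z assume "z \<in> coset R Q (add R x y)"
  then obtain q where q: "q \<in> Q" and z: "z = add R (add R x y) q" by (auto simp: coset_iff)
  have "z = add R (add R x q) y"
    using z x y q hyperideal_carrier[OF hyperideal] by (simp add: add_assoc add_comm[of y])
  moreover have "add R x q \<in> coset R Q x" using q by (auto simp: coset_iff)
  ultimately show "z \<in> set_add R (coset R Q x) (coset R Q y)"
    using coset_self[OF y] by (auto simp: set_add_def)
qed

lemma neg_image_coset: assumes y: "y \<in> carrier R"
  shows "neg R ` coset R Q y = coset R Q (neg R y)"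
proof (intro equalityI subsetI)
  fix z assume "z \<in> neg R ` coset R Q y"
  then obtain q where q: "q \<in> Q" and z: "z = neg R (add R y q)" by (auto simp: coset_iff)
  then show "z \<in> coset R Q (neg R y)"
    using y hyperideal_neg[OF hyperideal] hyperideal_carrier[OF hyperideal]
    by (auto simp: coset_iff neg_add)
next
  fix z assume "z \<in> coset R Q (neg R y)"
  then obtain q where q: "q \<in> Q" and z: "z = add R (neg R y) q" by (auto simp: coset_iff)
  then have "z = neg R (add R y (neg R q))"
    using y hyperideal_carrier[OF hyperideal] by (simp add: neg_add)
  moreover have "add R y (neg R q) \<in> coset R Q y"
    using q hyperideal_neg[OF hyperideal] by (auto simp: coset_iff)
  ultimately show "z \<in> neg R ` coset R Q y" by blast
qed

lemma carrier_quot: "carrier (quot R Q) = coset R Q ` carrier R"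
  by (simp add: quot_def quot_set_def)

lemma zero_quot: "zero (quot R Q) = Q"
  by (simp add: quot_def)

lemma add_quot: "x \<in> carrier R \<Longrightarrow> y \<in> carrier R \<Longrightarrow>
    add (quot R Q) (coset R Q x) (coset R Q y) = coset R Q (add R x y)"
  by (simp add: quot_def set_add_coset)

lemma sub_quot: "x \<in> carrier R \<Longrightarrow> y \<in> carrier R \<Longrightarrow>
    sub (quot R Q) (coset R Q x) (coset R Q y) = coset R Q (sub R x y)"
  by (simp add: quot_def sub_def neg_image_coset set_add_coset)

lemma hmul_quot: assumes x: "x \<in> carrier R" and y: "y \<in> carrier R"
  shows "hmul (quot R Q) (coset R Q x) (coset R Q y) = coset R Q ` hmul R x y"
proof (intro equalityI subsetI)
  fix Z assume "Z \<in> hmul (quot R Q) (coset R Q x) (coset R Q y)"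
  then obtain q q' z where q: "q \<in> Q" "q' \<in> Q" and z: "z \<in> hmul R (add R x q) (add R y q')"
    and Z: "Z = coset R Q z"
    by (auto simp: quot_def coset_iff)
  then obtain u r where u: "u \<in> hmul R x y" and r: "r \<in> Q" and "z = add R u r"
    using hmul_add_hyperideal_subset[OF hyperideal x y q] by (auto simp: set_add_def)
  then have "Z = coset R Q u" using Z coset_add_right hmul_closed[OF x y] by auto
  with u show "Z \<in> coset R Q ` hmul R x y" by blast
next
  fix Z assume "Z \<in> coset R Q ` hmul R x y"
  then show "Z \<in> hmul (quot R Q) (coset R Q x) (coset R Q y)"
    using coset_self[OF x] coset_self[OF y] by (auto simp: quot_def)
qed

lemma set_sub_quot_image: assumes "A \<subseteq> carrier R" and "B \<subseteq> carrier R"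
  shows "set_sub (quot R Q) (coset R Q ` A) (coset R Q ` B) = coset R Q ` set_sub R A B"
proof -
  have "sub (quot R Q) (coset R Q a) (coset R Q b) = coset R Q (sub R a b)"
    if "a \<in> A" "b \<in> B" for a b
    using that assms sub_quot by blast
  then show ?thesis unfolding set_sub_def by (auto simp: image_iff) metis
qed

context
  fixes P :: "'a set"
  assumes P: "hyperideal R P" and Q_subset: "Q \<subseteq> P"
begin

lemma coset_in_quot_set_iff: assumes x: "x \<in> carrier R"
  shows "coset R Q x \<in> quot_set R Q P \<longleftrightarrow> x \<in> P"
proof
  assume "coset R Q x \<in> quot_set R Q P"
  then obtain p where p: "p \<in> P" and "coset R Q x = coset R Q p" by (auto simp: quot_set_def)
  then have "sub R x p \<in> P" using coset_eq_iff x hyperideal_carrier[OF P] Q_subset by blast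
  then show "x \<in> P" using hyperideal_sub_mem_iff[OF P p x] by blast
qed (simp add: quot_set_def)

lemma coset_image_subset_quot_set_iff:
  "D \<subseteq> carrier R \<Longrightarrow> coset R Q ` D \<subseteq> quot_set R Q P \<longleftrightarrow> D \<subseteq> P"
  using coset_in_quot_set_iff by auto

lemma quot_set_eq_carrier_iff: "quot_set R Q P = carrier (quot R Q) \<longleftrightarrow> P = carrier R"
  using coset_image_subset_quot_set_iff[of "carrier R"] hyperideal_carrier[OF P]
  by (auto simp: carrier_quot quot_set_def)

lemma hyperideal_quot_set: "hyperideal (quot R Q) (quot_set R Q P)"
  unfolding hyperideal_def
proof (intro conjI ballI)
  show "quot_set R Q P \<subseteq> carrier (quot R Q)"
    using hyperideal_carrier[OF P] by (auto simp: carrier_quot quot_set_def)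
  show "quot_set R Q P \<noteq> {}" using hyperideal_zero[OF P] by (auto simp: quot_set_def)
next
  fix X Y assume "X \<in> quot_set R Q P" "Y \<in> quot_set R Q P"
  then obtain x y where "x \<in> P" "y \<in> P" "X = coset R Q x" "Y = coset R Q y"
    by (auto simp: quot_set_def)
  then show "sub (quot R Q) X Y \<in> quot_set R Q P"
    using sub_quot hyperideal_carrier[OF P] hyperideal_sub_closed[OF P] by (simp add: quot_set_def)
next
  fix A X assume "A \<in> carrier (quot R Q)" "X \<in> quot_set R Q P"
  then obtain a p where a: "a \<in> carrier R" and p: "p \<in> P"
    and "A = coset R Q a" "X = coset R Q p"
    by (auto simp: carrier_quot quot_set_def)
  moreover have "hmul R a p \<subseteq> P" using hyperideal_hmul_closed[OF P a p] .
  ultimately show "hmul (quot R Q) A X \<subseteq> quot_set R Q P"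
    using hmul_quot[OF a] hyperideal_carrier[OF P p] by (auto simp: quot_set_def)
qed

lemma set_sub_squares_quot_subset_iff:
  assumes x: "x \<in> carrier R" and y: "y \<in> carrier R"
  shows "set_sub (quot R Q) (hmul (quot R Q) (coset R Q x) (coset R Q x))
           (hmul (quot R Q) (coset R Q y) (coset R Q y)) \<subseteq> quot_set R Q P
         \<longleftrightarrow> set_sub R (hmul R x x) (hmul R y y) \<subseteq> P"
proof -
  have "set_sub R (hmul R x x) (hmul R y y) \<subseteq> carrier R"
    using hmul_closed[OF x x] hmul_closed[OF y y] by (fastforce simp: set_sub_def)
  then show ?thesis
    using x y hmul_closed by (simp add: hmul_quot set_sub_quot_image coset_image_subset_quot_set_iff)
qed

lemma sdf_absorbing_quot:
  assumes sdf: "sdf_absorbing R P"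
  shows "sdf_absorbing (quot R Q) (quot_set R Q P)"
  unfolding sdf_absorbing_def
proof (intro conjI hyperideal_quot_set ballI impI)
  show "quot_set R Q P \<noteq> carrier (quot R Q)"
    using sdf quot_set_eq_carrier_iff by (simp add: sdf_absorbing_def)
next
  fix A B assume A_carrier: "A \<in> carrier (quot R Q)" and B_carrier: "B \<in> carrier (quot R Q)"
    and A_nonzero: "A \<noteq> zero (quot R Q)" and B_nonzero: "B \<noteq> zero (quot R Q)"
    and squares: "set_sub (quot R Q) (hmul (quot R Q) A A) (hmul (quot R Q) B B) \<subseteq> quot_set R Q P"
  obtain x y where x: "x \<in> carrier R" and y: "y \<in> carrier R"
    and A: "A = coset R Q x" and B: "B = coset R Q y"
    using A_carrier B_carrier by (auto simp: carrier_quot)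
  have "x \<notin> Q" "y \<notin> Q"
    using A_nonzero B_nonzero x y A B by (auto simp: zero_quot coset_eq_hyperideal_iff)
  then have "x \<noteq> zero R" "y \<noteq> zero R" using hyperideal_zero[OF hyperideal] by auto
  moreover have "set_sub R (hmul R x x) (hmul R y y) \<subseteq> P"
    using squares set_sub_squares_quot_subset_iff[OF x y] A B by simp
  ultimately have "sub R x y \<in> P \<or> add R x y \<in> P" using sdf_absorbingD[OF sdf x y] by blast
  then show "sub (quot R Q) A B \<in> quot_set R Q P \<or> add (quot R Q) A B \<in> quot_set R Q P"
    using A B x y by (simp add: sub_quot add_quot coset_in_quot_set_iff)
qed

lemma square_subset_imp_mem:
  assumes sdf: "sdf_absorbing (quot R Q) (quot_set R Q P)" and strict: "Q \<noteq> P"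
    and z: "z \<in> carrier R" and square: "hmul R z z \<subseteq> P"
  shows "z \<in> P"
proof (rule ccontr)
  assume z_notin: "z \<notin> P"
  obtain p where p: "p \<in> P" "p \<notin> Q" using strict Q_subset by blast
  have p_carrier: "p \<in> carrier R" using hyperideal_carrier[OF P p(1)] .
  define a where "a = add R z p"
  have a: "a \<in> carrier R" "a \<notin> P"
    using z p_carrier z_notin hyperideal_add_mem_iff[OF P p(1) z] by (auto simp: a_def)
  have "hmul R a a \<subseteq> set_add R (hmul R z z) P"
    unfolding a_def using hmul_add_hyperideal_subset[OF P z z p(1) p(1)] .
  also have "\<dots> \<subseteq> P" using square hyperideal_add[OF P] by (auto simp: set_add_def)
  finally have "hmul R a a \<subseteq> P" .
  moreover have "hmul R p p \<subseteq> P" using hyperideal_hmul_closed[OF P p_carrier p(1)] .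
  ultimately have "set_sub R (hmul R a a) (hmul R p p) \<subseteq> P"
    using hyperideal_sub_closed[OF P] by (auto simp: set_sub_def)
  moreover have "coset R Q a \<noteq> zero (quot R Q)" "coset R Q p \<noteq> zero (quot R Q)"
    using a p p_carrier Q_subset by (auto simp: zero_quot coset_eq_hyperideal_iff)
  ultimately have "sub (quot R Q) (coset R Q a) (coset R Q p) \<in> quot_set R Q P \<or>
      add (quot R Q) (coset R Q a) (coset R Q p) \<in> quot_set R Q P"
    using sdf_absorbingD[OF sdf] a(1) p_carrier set_sub_squares_quot_subset_iff[OF a(1) p_carrier]
    by (simp add: carrier_quot)
  then have "sub R a p \<in> P \<or> add R a p \<in> P"
    using a(1) p_carrier by (simp add: sub_quot add_quot coset_in_quot_set_iff)
  then show False
    using z z_notin a p p_carrier hyperideal_add_mem_iff[OF P p(1) a(1)] by (auto simp: a_def)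
qed

lemma sdf_absorbing_of_quot:
  assumes sdf: "sdf_absorbing (quot R Q) (quot_set R Q P)" and strict: "Q \<noteq> P"
  shows "sdf_absorbing R P"
  unfolding sdf_absorbing_def
proof (intro conjI P ballI impI)
  show "P \<noteq> carrier R" using sdf quot_set_eq_carrier_iff by (simp add: sdf_absorbing_def)
next
  fix x y assume x: "x \<in> carrier R" and y: "y \<in> carrier R"
    and "x \<noteq> zero R" "y \<noteq> zero R"
    and squares: "set_sub R (hmul R x x) (hmul R y y) \<subseteq> P"
  consider "x \<in> Q \<or> y \<in> Q" | "x \<notin> Q" "y \<notin> Q" by blast
  then show "sub R x y \<in> P \<or> add R x y \<in> P"
  proof cases
    case 1
    then have "hmul R x x \<subseteq> P \<or> hmul R y y \<subseteq> P"
      using x y Q_subset hyperideal_hmul_closed[OF P] by blast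
    then have "hmul R x x \<subseteq> P" "hmul R y y \<subseteq> P"
      using hyperideal_set_sub_subset_iff[OF P _ _ _ _ squares] x y hmul_closed hmul_nonempty
      by blast+
    then have "x \<in> P" "y \<in> P" using square_subset_imp_mem[OF sdf strict] x y by blast+
    then show ?thesis using hyperideal_sub_closed[OF P] by blast
  next
    case 2
    then have "coset R Q x \<noteq> zero (quot R Q)" "coset R Q y \<noteq> zero (quot R Q)"
      using x y by (auto simp: zero_quot coset_eq_hyperideal_iff)
    then have "sub (quot R Q) (coset R Q x) (coset R Q y) \<in> quot_set R Q P \<or>
        add (quot R Q) (coset R Q x) (coset R Q y) \<in> quot_set R Q P"
      using sdf_absorbingD[OF sdf] x y squares set_sub_squares_quot_subset_iff[OF x y]
      by (simp add: carrier_quot)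
    then show ?thesis using x y by (simp add: sub_quot add_quot coset_in_quot_set_iff)
  qed
qed

end

end

lemma (in mult_hyperring) sdf_absorbing_restrict_carrier:
  assumes K: "K \<subseteq> carrier R" and K_hyperring: "comm_mult_hyperring (R\<lparr>carrier := K\<rparr>)"
    and not_subset: "\<not> K \<subseteq> P" and sdf: "sdf_absorbing R P"
  shows "sdf_absorbing (R\<lparr>carrier := K\<rparr>) (P \<inter> K)"
proof -
  interpret K: mult_hyperring "R\<lparr>carrier := K\<rparr>" using K_hyperring by unfold_locales
  have P: "hyperideal R P" using sdf by (simp add: sdf_absorbing_def)
  have sub_K: "sub (R\<lparr>carrier := K\<rparr>) = sub R" by (simp add: sub_def fun_eq_iff)
  have set_sub_K: "set_sub (R\<lparr>carrier := K\<rparr>) = set_sub R" by (simp add: set_sub_def sub_K fun_eq_iff)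
  show ?thesis unfolding sdf_absorbing_def hyperideal_def
  proof (intro conjI ballI impI)
    show "P \<inter> K \<noteq> {}" using K.zero_closed hyperideal_zero[OF P] by auto
    show "P \<inter> K \<noteq> carrier (R\<lparr>carrier := K\<rparr>)" using not_subset by auto
  next
    fix x y assume "x \<in> P \<inter> K" "y \<in> P \<inter> K"
    then show "sub (R\<lparr>carrier := K\<rparr>) x y \<in> P \<inter> K"
      using hyperideal_sub_closed[OF P] K.sub_closed[of x y] by (simp add: sub_K)
  next
    fix r x assume "r \<in> carrier (R\<lparr>carrier := K\<rparr>)" "x \<in> P \<inter> K"
    then show "hmul (R\<lparr>carrier := K\<rparr>) r x \<subseteq> P \<inter> K"
      using hyperideal_hmul_closed[OF P, of r x] K.hmul_closed[of r x] K by auto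
  next
    fix x y assume x: "x \<in> carrier (R\<lparr>carrier := K\<rparr>)" and y: "y \<in> carrier (R\<lparr>carrier := K\<rparr>)"
      and "x \<noteq> zero (R\<lparr>carrier := K\<rparr>)" "y \<noteq> zero (R\<lparr>carrier := K\<rparr>)"
      and "set_sub (R\<lparr>carrier := K\<rparr>) (hmul (R\<lparr>carrier := K\<rparr>) x x) (hmul (R\<lparr>carrier := K\<rparr>) y y)
         \<subseteq> P \<inter> K"
    then have "sub R x y \<in> P \<or> add R x y \<in> P"
      using sdf_absorbingD[OF sdf, of x y] K by (auto simp: set_sub_K)
    then show "sub (R\<lparr>carrier := K\<rparr>) x y \<in> P \<inter> K \<or> add (R\<lparr>carrier := K\<rparr>) x y \<in> P \<inter> K"
      using K.sub_closed[OF x y] K.add_closed[OF x y] by (auto simp: sub_K)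
  qed simp_all
qed

theorem mainTheorem10:
  fixes R :: "'a mhr" and P :: "'a set"
  assumes "comm_mult_hyperring R" and "has_identity R" and "strong_C_hyperideal R P"
  shows "(\<forall>K. K \<subseteq> carrier R \<and> comm_mult_hyperring (R\<lparr>carrier := K\<rparr>) \<and> \<not> K \<subseteq> P \<and>
              sdf_absorbing R P \<longrightarrow> sdf_absorbing (R\<lparr>carrier := K\<rparr>) (P \<inter> K))
       \<and> (\<forall>Q. hyperideal R Q \<and> Q \<subseteq> P \<and> sdf_absorbing R P \<longrightarrow>
              sdf_absorbing (quot R Q) (quot_set R Q P))
       \<and> (\<forall>Q. hyperideal R Q \<and> Q \<subset> P \<longrightarrow>
              (sdf_absorbing R P \<longleftrightarrow> sdf_absorbing (quot R Q) (quot_set R Q P)))"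
proof -
  interpret mult_hyperring R using assms(1) by unfold_locales
  have P: "hyperideal R P" using assms(3) by (simp add: strong_C_hyperideal_def)
  have Q: "quotient_hyperring R Q" if "hyperideal R Q" for Q using that by unfold_locales
  show ?thesis
    using sdf_absorbing_restrict_carrier quotient_hyperring.sdf_absorbing_quot[OF Q P]
      quotient_hyperring.sdf_absorbing_of_quot[OF Q P] by blast
qed

end
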